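(* Let $V$ be any finite set of points in $\mathbb{R}^m$ with $|V|\ge 2$, and let $T$ be any tree produced by the bisecting $k$-means algorithm on $V$. Then $T$ is a constant-factor approximation for the Hierarchical-Revenue objective: there is an absolute constant $\gamma>0$ (one may take $\gamma=\tfrac{1}{35}$), independent of $V$ and $m$, such that $rev_T(V)\ \ge\ \gamma\cdot \max_{T'} rev_{T'}(V)$, where the maximum is over all hierarchical clustering trees $T'$ on $V$.
   Context: Distances are Euclidean: $d(x,y)=\|x-y\|_2$. For a finite nonempty $S\subset\mathbb{R}^m$, $\rho(S)=\frac{1}{|S|}\sum_{u\in S}u$ is its centroid and $\Delta_1(S)=\sum_{u\in S}d(u,\rho(S))^2$. A partition $(S_1,S_2)$ of a finite set $S$ ($|S|\ge2$) into two nonempty sets is an optimal 2-means partition if it minimizes $\Delta_1(S_1)+\Delta_1(S_2)$ over all such partitions. A hierarchical clustering tree $T$ on $V$ is a rooted binary tree (each internal node has exactly two children) whose leaves are in bijection with $V$; each node is identified with the set of points at the leaves of its subtree. If an internal node has set $S$ and its children have sets $S_1,S_2$, we call this a split and write $S\to(S_1,S_2)\in T$. The bisecting $k$-means algorithm builds $T$ top-down: starting from the root set $V$, every set $S$ with $|S|\ge 2$ is split into an optimal 2-means partition $(S_1,S_2)$ of $S$, recursively, until all sets are singletons. Revenue: for a split $S\to(S_1,S_2)$ and $i\in S_1$, $j\in S_2$, let $\delta_{S_1,S_2}(i,j)=\max\{d(i,\rho(S_1)),d(j,\rho(S_2))\}$ and $rev(i,j)=\min\{d(i,j)/\delta_{S_1,S_2}(i,j),\,1\}$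 (with $rev(i,j)=1$ if $\delta_{S_1,S_2}(i,j)=0$). Let $rev(S_1,S_2)=\sum_{i\in S_1}\sum_{j\in S_2}rev(i,j)$. The Hierarchical-Revenue of $T$ is $rev_T(V)=\sum_{S\to(S_1,S_2)\in T}rev(S_1,S_2)$, i.e. the sum over all unordered pairs $\{i,j\}\subseteq V$ of $rev(i,j)$ computed at the split where $i$ and $j$ are first separated. *)

theory Defs
  imports "HOL-Analysis.Analysis"
begin

definition centroid :: "'a::euclidean_space set \<Rightarrow> 'a" where
  "centroid S = (1 / real (card S)) *\<^sub>R (\<Sum>u\<in>S. u)"

definition cost1 :: "'a::euclidean_space set \<Rightarrow> real" where
  "cost1 S = (\<Sum>u\<in>S. (dist u (centroid S))\<^sup>2)"

definition opt_2means :: "'a::euclidean_space set \<Rightarrow> 'a set \<Rightarrow> 'a set \<Rightarrow> bool" where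
  "opt_2means S S1 S2 \<longleftrightarrow>
     S1 \<noteq> {} \<and> S2 \<noteq> {} \<and> S1 \<inter> S2 = {} \<and> S1 \<union> S2 = S \<and>
     (\<forall>A B. A \<noteq> {} \<and> B \<noteq> {} \<and> A \<inter> B = {} \<and> A \<union> B = S \<longrightarrow>
        cost1 S1 + cost1 S2 \<le> cost1 A + cost1 B)"

datatype 'a htree = Leaf 'a | Node "'a htree" "'a htree"

fun leaves :: "'a htree \<Rightarrow> 'a list" where
  "leaves (Leaf x) = [x]"
| "leaves (Node l r) = leaves l @ leaves r"

definition lset :: "'a htree \<Rightarrow> 'a set" where
  "lset t = set (leaves t)"

definition hc_tree :: "'a set \<Rightarrow> 'a htree \<Rightarrow> bool" where
  "hc_tree V T \<longleftrightarrow> distinct (leaves T) \<and> set (leaves T) = V"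

fun all_splits_opt :: "'a::euclidean_space htree \<Rightarrow> bool" where
  "all_splits_opt (Leaf x) = True"
| "all_splits_opt (Node l r) =
     (opt_2means (lset (Node l r)) (lset l) (lset r) \<and> all_splits_opt l \<and> all_splits_opt r)"

definition bisecting_kmeans_tree :: "'a::euclidean_space set \<Rightarrow> 'a htree \<Rightarrow> bool" where
  "bisecting_kmeans_tree V T \<longleftrightarrow> hc_tree V T \<and> all_splits_opt T"

definition rev_pair :: "'a::euclidean_space set \<Rightarrow> 'a set \<Rightarrow> 'a \<Rightarrow> 'a \<Rightarrow> real" where
  "rev_pair S1 S2 i j =
     (let \<delta> = max (dist i (centroid S1)) (dist j (centroid S2))
      in if \<delta> = 0 then 1 else min (dist i j / \<delta>) 1)"

definition rev_split :: "'a::euclidean_space set \<Rightarrow> 'a set \<Rightarrow> real" where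
  "rev_split S1 S2 = (\<Sum>i\<in>S1. \<Sum>j\<in>S2. rev_pair S1 S2 i j)"

fun rev_tree :: "'a::euclidean_space htree \<Rightarrow> real" where
  "rev_tree (Leaf x) = 0"
| "rev_tree (Node l r) = rev_split (lset l) (lset r) + rev_tree l + rev_tree r"

end

theory Submission
  imports Defs
begin

text \<open>
  Every hierarchical clustering tree separates each pair of points exactly once, and a pair earns
  revenue at most 1, so every tree on \<open>V\<close> has revenue at most \<open>|V| choose 2\<close>.

  Conversely, let \<open>S \<rightarrow> (S1, S2)\<close> be an optimal 2-means split with centroids \<open>c1, c2\<close>.
  Moving a subset \<open>X\<close> of \<open>S2\<close> over to \<open>S1\<close> cannot lower the cost, which by Ward's formula
  bounds the distance from the centroid of \<open>X\<close> to \<open>c2\<close> in terms of its distance to \<open>c1\<close>.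
  For \<open>i \<in> S1\<close> with \<open>a = d(i, c1)\<close>, apply this to the points \<open>j \<in> S2\<close> closer than \<open>a/10\<close>
  to \<open>i\<close> with \<open>d(j, c2) \<le> a\<close>: their centroid lies within \<open>a/10\<close> of \<open>i\<close>, hence at distance at
  least \<open>9a/10\<close> from \<open>c2\<close> (points are closer to their own centroid), while switching it to
  \<open>c1\<close> gains at most \<open>0.42 a\<^sup>2\<close>. So there are at most \<open>(42/81) |S1| |S2| / (|S1| + |S2|)\<close>
  such \<open>j\<close>. Every pair not of this kind (from either side) earns revenue at least \<open>1/10\<close>,
  so the split earns at least \<open>(39/810) |S1| |S2| \<ge> |S1| |S2| / 35\<close>; summing over the splits of
  the bisecting tree gives revenue at least \<open>(|V| choose 2) / 35\<close>.
\<close>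

lemma sum_eq_card_scaleR_centroid:
  assumes "finite A" "A \<noteq> {}"
  shows "(\<Sum>x\<in>A. x) = real (card A) *\<^sub>R centroid A"
  using assms by (simp add: centroid_def)

lemma sum_sq_dist_eq_cost1:
  fixes A :: "'a::euclidean_space set"
  assumes "finite A" "A \<noteq> {}"
  shows "(\<Sum>x\<in>A. (dist x z)\<^sup>2) = cost1 A + real (card A) * (dist (centroid A) z)\<^sup>2"
proof -
  let ?c = "centroid A"
  have "(\<Sum>x\<in>A. (dist x z)\<^sup>2) = (\<Sum>x\<in>A. (dist x ?c)\<^sup>2 + 2 * inner (x - ?c) (?c - z) + (dist ?c z)\<^sup>2)"
    by (simp add: dist_norm power2_norm_eq_inner inner_diff_left inner_diff_right inner_commute algebra_simps)
  also have "\<dots> = cost1 A + 2 * inner (\<Sum>x\<in>A. x - ?c) (?c - z) + real (card A) * (dist ?c z)\<^sup>2"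
    by (simp add: sum.distrib cost1_def inner_sum_left sum_distrib_left)
  also have "(\<Sum>x\<in>A. x - ?c) = 0"
    using sum_eq_card_scaleR_centroid[OF assms] by (simp add: sum_subtractf sum_constant_scaleR)
  finally show ?thesis by simp
qed

lemma centroid_Un:
  fixes A B :: "'a::euclidean_space set"
  assumes "finite A" "finite B" "A \<noteq> {}" "B \<noteq> {}" "A \<inter> B = {}"
  shows "real (card (A \<union> B)) *\<^sub>R centroid (A \<union> B) = real (card A) *\<^sub>R centroid A + real (card B) *\<^sub>R centroid B"
  using assms by (simp add: sum_eq_card_scaleR_centroid[symmetric] sum.union_disjoint)

lemma dist_centroid_Un:
  fixes A B :: "'a::euclidean_space set"
  assumes "finite A" "finite B" "A \<noteq> {}" "B \<noteq> {}" "A \<inter> B = {}"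
  shows "real (card B) * dist (centroid A) (centroid B)
         = (real (card A) + real (card B)) * dist (centroid A) (centroid (A \<union> B))"
proof -
  define a b where "a = real (card A)" and "b = real (card B)"
  have "a > 0" "b > 0"
    using assms by (auto simp: a_def b_def card_gt_0_iff)
  have "(a + b) *\<^sub>R centroid (A \<union> B) = a *\<^sub>R centroid A + b *\<^sub>R centroid B"
    using centroid_Un[OF assms] assms by (simp add: a_def b_def card_Un_disjoint)
  then have "b *\<^sub>R (centroid A - centroid B) = (a + b) *\<^sub>R (centroid A - centroid (A \<union> B))"
    by (simp add: algebra_simps)
  then show ?thesis
    using \<open>a > 0\<close> \<open>b > 0\<close> by (metis a_def b_def abs_of_pos add_pos_pos dist_norm norm_scaleR)
qed

lemma cost1_Un:
  fixes A B :: "'a::euclidean_space set"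
  assumes fin: "finite A" "finite B" and ne: "A \<noteq> {}" "B \<noteq> {}" and disj: "A \<inter> B = {}"
  shows "cost1 (A \<union> B) = cost1 A + cost1 B
           + real (card A) * real (card B) / (real (card A) + real (card B)) * (dist (centroid A) (centroid B))\<^sup>2"
proof -
  define a where "a = real (card A)"
  define b where "b = real (card B)"
  define c where "c = centroid (A \<union> B)"
  have a: "a > 0" and b: "b > 0" using fin ne by (auto simp: a_def b_def card_gt_0_iff)
  have dA: "dist (centroid A) c = b / (a + b) * dist (centroid A) (centroid B)"
    using dist_centroid_Un[OF assms] a b by (simp add: a_def b_def c_def field_simps)
  have dB: "dist (centroid B) c = a / (a + b) * dist (centroid A) (centroid B)"
    using dist_centroid_Un[of B A] assms a b
    by (simp add: a_def b_def c_def Un_commute Int_commute dist_commute field_simps)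
  have "cost1 (A \<union> B) = (\<Sum>x\<in>A. (dist x c)\<^sup>2) + (\<Sum>x\<in>B. (dist x c)\<^sup>2)"
    using fin disj by (simp add: cost1_def c_def sum.union_disjoint)
  also have "\<dots> = cost1 A + cost1 B + (a * (dist (centroid A) c)\<^sup>2 + b * (dist (centroid B) c)\<^sup>2)"
    using fin ne by (simp add: sum_sq_dist_eq_cost1 a_def b_def)
  also have "a * (dist (centroid A) c)\<^sup>2 + b * (dist (centroid B) c)\<^sup>2
             = (a * (b / (a + b))\<^sup>2 + b * (a / (a + b))\<^sup>2) * (dist (centroid A) (centroid B))\<^sup>2"
    unfolding dA dB by (simp only: power_mult_distrib distrib_right mult.assoc)
  also have "a * (b / (a + b))\<^sup>2 + b * (a / (a + b))\<^sup>2 = a * b * (a + b) / (a + b)\<^sup>2"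
    by (simp add: power_divide add_divide_distrib power2_eq_square algebra_simps)
  also have "\<dots> = a * b / (a + b)"
    using a b by (simp add: power2_eq_square)
  finally show ?thesis by (simp add: a_def b_def)
qed

lemma cost1_Un_dist_centroid_Un:
  fixes A B :: "'a::euclidean_space set"
  assumes "finite A" "finite B" "A \<noteq> {}" "B \<noteq> {}" "A \<inter> B = {}"
  shows "cost1 (A \<union> B) = cost1 A + cost1 B
           + real (card A) * (real (card A) + real (card B)) / real (card B)
             * (dist (centroid A) (centroid (A \<union> B)))\<^sup>2"
proof -
  define a b where "a = real (card A)" and "b = real (card B)"
  have "a > 0" "b > 0"
    using assms by (auto simp: a_def b_def card_gt_0_iff)
  then have "dist (centroid A) (centroid B) = (a + b) / b * dist (centroid A) (centroid (A \<union> B))"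
    using dist_centroid_Un[OF assms] by (simp add: a_def b_def field_simps)
  moreover have "a * b / (a + b) * ((a + b) / b)\<^sup>2 = a * (a + b) / b"
    using \<open>a > 0\<close> \<open>b > 0\<close> by (simp add: power2_eq_square divide_simps)
  ultimately show ?thesis
    using cost1_Un[OF assms] unfolding a_def[symmetric] b_def[symmetric]
    by (metis power_mult_distrib mult.assoc)
qed

lemma opt_2means_sym: "opt_2means S S1 S2 \<Longrightarrow> opt_2means S S2 S1"
  unfolding opt_2means_def by (metis Int_commute Un_commute add.commute)

lemma opt_2means_le:
  assumes "opt_2means S S1 S2" "A \<noteq> {}" "B \<noteq> {}" "A \<inter> B = {}" "A \<union> B = S"
  shows "cost1 S1 + cost1 S2 \<le> cost1 A + cost1 B"
  using assms unfolding opt_2means_def by blast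

text \<open>Optimality against the partition \<open>(S1 \<union> X, S2 - X)\<close>, evaluated with Ward's formula.\<close>

lemma opt_2means_move:
  fixes S :: "'a::euclidean_space set"
  assumes fin: "finite S" and opt: "opt_2means S S1 S2"
    and X: "X \<subseteq> S2" "X \<noteq> {}" "X \<noteq> S2"
  shows "real (card X) * (real (card S1) + real (card S2)) * (dist (centroid X) (centroid S2))\<^sup>2
         \<le> real (card S1) * (real (card S2) - real (card X))
           * ((dist (centroid X) (centroid S1))\<^sup>2 - (dist (centroid X) (centroid S2))\<^sup>2)"
proof -
  define Y where "Y = S2 - X"
  have S1: "finite S1" "S1 \<noteq> {}" and "finite S2" and S2: "S2 = X \<union> Y"
    using opt fin X(1) unfolding opt_2means_def Y_def by (auto intro: finite_subset)
  have XY: "finite X" "finite Y" "Y \<noteq> {}" "X \<inter> Y = {}"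
    using X \<open>finite S2\<close> unfolding Y_def by (auto intro: finite_subset)
  have "S1 \<inter> X = {}"
    using opt X(1) unfolding opt_2means_def by blast
  have "(S1 \<union> X) \<union> Y = S" "(S1 \<union> X) \<inter> Y = {}" "S1 \<union> X \<noteq> {}"
    using opt X(1) S1(2) unfolding opt_2means_def Y_def by blast+
  then have opt_le: "cost1 S1 + cost1 S2 \<le> cost1 (S1 \<union> X) + cost1 Y"
    using opt_2means_le[OF opt _ XY(3)] by simp
  define n1 k m where "n1 = real (card S1)" and "k = real (card X)" and "m = real (card Y)"
  define y Q R where "y = centroid X"
    and "Q = (dist y (centroid S2))\<^sup>2" and "R = (dist y (centroid S1))\<^sup>2"
  have pos: "n1 > 0" "k > 0" "m > 0"
    using S1 XY X(2) by (auto simp: n1_def k_def m_def card_gt_0_iff)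
  have n2: "real (card S2) = k + m"
    using XY by (simp add: S2 card_Un_disjoint k_def m_def)
  have "cost1 S2 = cost1 X + cost1 Y + k * (k + m) / m * Q"
    using cost1_Un_dist_centroid_Un[of X Y] XY X(2) S2 by (simp add: k_def m_def y_def Q_def)
  moreover have "cost1 (S1 \<union> X) = cost1 S1 + cost1 X + n1 * k / (n1 + k) * R"
    using cost1_Un[of S1 X] S1 XY X(2) \<open>S1 \<inter> X = {}\<close>
    by (simp add: n1_def k_def R_def y_def dist_commute)
  ultimately have "k * (k + m) / m * Q \<le> n1 * k / (n1 + k) * R"
    using opt_le by linarith
  then have "k * ((k + m) / m * Q) \<le> k * (n1 / (n1 + k) * R)"
    by (simp add: ac_simps)
  then have "(k + m) / m * Q \<le> n1 / (n1 + k) * R"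
    using pos(2) mult_le_cancel_left_pos by blast
  then have "(k + m) * (n1 + k) * Q \<le> n1 * m * R"
    using pos by (simp add: field_simps add_pos_pos)
  then have "k * (n1 + (k + m)) * Q \<le> n1 * m * (R - Q)"
    by (simp add: algebra_simps)
  then show ?thesis
    unfolding n1_def[symmetric] k_def[symmetric] y_def[symmetric] Q_def[symmetric] R_def[symmetric]
    by (simp add: n2)
qed

lemma opt_2means_centroid_subset_closer:
  fixes S :: "'a::euclidean_space set"
  assumes fin: "finite S" and opt: "opt_2means S S1 S2" and X: "X \<subseteq> S2" "X \<noteq> {}"
  shows "dist (centroid X) (centroid S2) \<le> dist (centroid X) (centroid S1)"
proof (cases "X = S2")
  case False
  have "finite S1" "S1 \<noteq> {}" "finite S2"
    using opt fin unfolding opt_2means_def by auto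
  then have "real (card S1) * (real (card S2) - real (card X)) > 0"
    using psubset_card_mono[of S2 X] X False by (auto simp: card_gt_0_iff)
  moreover have "0 \<le> real (card X) * (real (card S1) + real (card S2)) * (dist (centroid X) (centroid S2))\<^sup>2"
    by simp
  ultimately have "(dist (centroid X) (centroid S2))\<^sup>2 \<le> (dist (centroid X) (centroid S1))\<^sup>2"
    using opt_2means_move[OF fin opt X False] by (smt (verit) mult_pos_neg)
  then show ?thesis
    by (simp add: power2_le_iff_abs_le)
qed simp

lemma opt_2means_closer_to_own_centroid:
  fixes S :: "'a::euclidean_space set"
  assumes "finite S" "opt_2means S S1 S2" "j \<in> S2"
  shows "dist j (centroid S2) \<le> dist j (centroid S1)"
  using opt_2means_centroid_subset_closer[OF assms(1,2), of "{j}"] assms(3)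
  by (simp add: centroid_def)

lemma dist_centroid_le:
  fixes X :: "'a::euclidean_space set"
  assumes "finite X" "X \<noteq> {}" "\<And>j. j \<in> X \<Longrightarrow> dist i j \<le> r"
  shows "dist i (centroid X) \<le> r"
proof -
  have "(\<Sum>j\<in>X. (1 / real (card X)) *\<^sub>R j) \<in> cball i r"
    using assms by (intro convex_sum) (auto simp: card_gt_0_iff)
  then show ?thesis
    by (simp add: centroid_def scaleR_sum_right)
qed

lemma sq_dist_diff_le:
  fixes i y c1 c2 :: "'a::euclidean_space"
  assumes "dist i c1 \<le> dist i c2"
  shows "(dist y c1)\<^sup>2 - (dist y c2)\<^sup>2 \<le> 2 * dist c1 c2 * dist i y"
proof -
  have "(dist y c1)\<^sup>2 - (dist y c2)\<^sup>2 = ((dist i c1)\<^sup>2 - (dist i c2)\<^sup>2) + 2 * inner (c2 - c1) (y - i)"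
    by (simp add: dist_norm power2_norm_eq_inner inner_diff_left inner_diff_right inner_commute algebra_simps)
  also have "\<dots> \<le> 0 + 2 * (norm (c2 - c1) * norm (y - i))"
    using assms norm_cauchy_schwarz[of "c2 - c1" "y - i"] by (intro add_mono) (auto intro: power_mono)
  finally show ?thesis
    by (simp add: dist_norm norm_minus_commute)
qed

definition near :: "'a::euclidean_space set \<Rightarrow> 'a set \<Rightarrow> 'a \<Rightarrow> 'a set" where
  "near S1 S2 i = {j\<in>S2. dist i j < dist i (centroid S1) / 10 \<and> dist j (centroid S2) \<le> dist i (centroid S1)}"

lemma centroid_near_bounds:
  fixes S :: "'a::euclidean_space set"
  assumes fin: "finite S" and opt: "opt_2means S S1 S2" and i: "i \<in> S1" and ne: "near S1 S2 i \<noteq> {}"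
  defines "a \<equiv> dist i (centroid S1)" and "y \<equiv> centroid (near S1 S2 i)"
  shows "9 / 10 * a \<le> dist y (centroid S2)"
    and "(dist y (centroid S1))\<^sup>2 - (dist y (centroid S2))\<^sup>2 \<le> 42 / 100 * a\<^sup>2"
proof -
  define c1 c2 where "c1 = centroid S1" and "c2 = centroid S2"
  obtain j0 where j0: "dist i j0 < a / 10" "dist j0 c2 \<le> a"
    using ne unfolding near_def a_def c2_def by blast
  have "a > 0"
    using j0(1) zero_le_dist[of i j0] by linarith
  have "finite (near S1 S2 i)"
    using opt fin unfolding opt_2means_def near_def by (auto intro: finite_subset)
  then have dist_i_y: "dist i y \<le> a / 10"
    unfolding y_def using ne by (rule dist_centroid_le) (auto simp: near_def a_def)
  have a_le: "a \<le> dist i c2"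
    using opt_2means_closer_to_own_centroid[OF fin opt_2means_sym[OF opt] i] by (simp add: a_def c2_def)
  have "dist i c2 \<le> dist i y + dist y c2"
    by (rule dist_triangle)
  then show "9 / 10 * a \<le> dist y (centroid S2)"
    using dist_i_y a_le by (simp add: c2_def)
  have "dist c1 c2 \<le> dist c1 i + dist i j0 + dist j0 c2"
    by (metis add_mono dist_triangle order_trans order_refl)
  then have "dist c1 c2 \<le> 21 / 10 * a"
    using j0 by (simp add: a_def c1_def dist_commute)
  then have "(dist y c1)\<^sup>2 - (dist y c2)\<^sup>2 \<le> 2 * (21 / 10 * a) * (a / 10)"
    using sq_dist_diff_le[of i c1 c2 y] a_le dist_i_y \<open>a > 0\<close> unfolding a_def c1_def
    by (smt (verit) mult_mono mult_nonneg_nonneg zero_le_dist)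
  then show "(dist y (centroid S1))\<^sup>2 - (dist y (centroid S2))\<^sup>2 \<le> 42 / 100 * a\<^sup>2"
    by (simp add: c1_def c2_def power2_eq_square)
qed

lemma card_near_le:
  fixes S :: "'a::euclidean_space set"
  assumes fin: "finite S" and opt: "opt_2means S S1 S2" and i: "i \<in> S1"
  shows "81 * real (card (near S1 S2 i)) * (real (card S1) + real (card S2))
         \<le> 42 * real (card S1) * real (card S2)"
proof (cases "near S1 S2 i = {}")
  case False
  define X a where "X = near S1 S2 i" and "a = dist i (centroid S1)"
  define Q L where "Q = (dist (centroid X) (centroid S2))\<^sup>2"
    and "L = (dist (centroid X) (centroid S1))\<^sup>2 - (dist (centroid X) (centroid S2))\<^sup>2"
  define n1 n2 k where "n1 = real (card S1)" and "n2 = real (card S2)" and "k = real (card X)"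
  note bounds = centroid_near_bounds[OF fin opt i False, folded X_def a_def]
  have "a > 0"
    using False unfolding near_def a_def by (auto intro: le_less_trans[OF zero_le_dist])
  have XS2: "X \<subseteq> S2" and "X \<noteq> {}"
    using False unfolding X_def near_def by auto
  have "X \<noteq> S2"
    using bounds(1) \<open>a > 0\<close> by auto
  have "(9 / 10 * a)\<^sup>2 \<le> Q"
    unfolding Q_def using bounds(1) \<open>a > 0\<close> by (intro power_mono) auto
  then have Q_ge: "81 / 100 * a\<^sup>2 \<le> Q"
    by (simp add: power2_eq_square)
  have "L \<ge> 0"
    using opt_2means_centroid_subset_closer[OF fin opt XS2 \<open>X \<noteq> {}\<close>] by (simp add: L_def power_mono)
  have "k * (n1 + n2) * (81 / 100 * a\<^sup>2) \<le> k * (n1 + n2) * Q"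
    using Q_ge by (intro mult_left_mono) (auto simp: k_def n1_def n2_def)
  also have "\<dots> \<le> n1 * (n2 - k) * L"
    using opt_2means_move[OF fin opt XS2 \<open>X \<noteq> {}\<close> \<open>X \<noteq> S2\<close>]
    by (simp add: k_def n1_def n2_def Q_def L_def)
  also have "\<dots> \<le> n1 * n2 * L"
    using \<open>L \<ge> 0\<close> by (intro mult_right_mono mult_left_mono) (auto simp: k_def n1_def)
  also have "\<dots> \<le> n1 * n2 * (42 / 100 * a\<^sup>2)"
    using bounds(2) by (intro mult_left_mono) (auto simp: n1_def n2_def L_def)
  finally have "(81 * k * (n1 + n2)) * (a\<^sup>2 / 100) \<le> (42 * n1 * n2) * (a\<^sup>2 / 100)"
    by (simp add: algebra_simps)
  then show ?thesis
    using \<open>a > 0\<close> by (simp add: X_def k_def n1_def n2_def)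
qed simp

lemma rev_pair_nonneg: "0 \<le> rev_pair S1 S2 i j"
  unfolding rev_pair_def Let_def by (auto simp: zero_le_divide_iff le_max_iff_disj)

lemma rev_pair_le_1: "rev_pair S1 S2 i j \<le> 1"
  unfolding rev_pair_def Let_def by auto

lemma rev_pair_ge_tenth:
  assumes "i \<in> S1" "j \<in> S2" "j \<notin> near S1 S2 i" "i \<notin> near S2 S1 j"
  shows "1 / 10 \<le> rev_pair S1 S2 i j"
proof -
  define \<delta> where "\<delta> = max (dist i (centroid S1)) (dist j (centroid S2))"
  have "\<delta> / 10 \<le> dist i j"
    using assms unfolding near_def \<delta>_def by (auto simp: dist_commute max_def)
  moreover have "0 \<le> \<delta>"
    by (simp add: \<delta>_def le_max_iff_disj)
  ultimately have "1 / 10 \<le> dist i j / \<delta>" if "\<delta> \<noteq> 0"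
    using that by (simp add: field_simps)
  then show ?thesis
    unfolding rev_pair_def Let_def \<delta>_def[symmetric] by auto
qed

lemma rev_split_le: "rev_split S1 S2 \<le> real (card S1) * real (card S2)"
proof -
  have "rev_split S1 S2 \<le> (\<Sum>i\<in>S1. real (card S2) * 1)"
    unfolding rev_split_def by (intro sum_mono sum_bounded_above) (rule rev_pair_le_1)
  also have "\<dots> \<le> real (card S1) * real (card S2)"
    by (simp add: sum_bounded_above)
  finally show ?thesis .
qed

lemma sum_card_near_le:
  fixes S :: "'a::euclidean_space set"
  assumes "finite S" "opt_2means S S1 S2"
  shows "81 * (\<Sum>i\<in>S1. real (card (near S1 S2 i))) \<le> 42 * real (card S1) * real (card S2)
           * (real (card S1) / (real (card S1) + real (card S2)))"
proof -
  have pos: "real (card S1) + real (card S2) > 0"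
    using assms unfolding opt_2means_def by (auto simp: card_gt_0_iff intro: add_pos_nonneg)
  have "81 * real (card (near S1 S2 i)) \<le> 42 * real (card S1) * real (card S2) / (real (card S1) + real (card S2))"
    if "i \<in> S1" for i
    using card_near_le[OF assms that] pos by (simp add: field_simps)
  then have "(\<Sum>i\<in>S1. 81 * real (card (near S1 S2 i)))
      \<le> real (card S1) * (42 * real (card S1) * real (card S2) / (real (card S1) + real (card S2)))"
    by (rule sum_bounded_above)
  then show ?thesis
    by (simp only: sum_distrib_left[symmetric]) (simp add: field_simps)
qed

lemma rev_split_ge_card_near:
  assumes fin: "finite S1" "finite S2"
  shows "real (card S1) * real (card S2) - (\<Sum>i\<in>S1. real (card (near S1 S2 i)))
           - (\<Sum>j\<in>S2. real (card (near S2 S1 j))) \<le> 10 * rev_split S1 S2"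
proof -
  define bad where "bad i j = of_bool (j \<in> near S1 S2 i) + (of_bool (i \<in> near S2 S1 j) :: real)" for i j
  have pointwise: "1 - bad i j \<le> 10 * rev_pair S1 S2 i j" if "i \<in> S1" "j \<in> S2" for i j
  proof (cases "j \<in> near S1 S2 i \<or> i \<in> near S2 S1 j")
    case True
    then have "1 \<le> bad i j"
      by (auto simp: bad_def)
    then show ?thesis
      using rev_pair_nonneg[of S1 S2 i j] by linarith
  next
    case False
    then show ?thesis
      using rev_pair_ge_tenth[OF that] by (simp add: bad_def)
  qed
  have "near S1 S2 i \<subseteq> S2" "near S2 S1 j \<subseteq> S1" for i j
    unfolding near_def by auto
  then have "(\<Sum>i\<in>S1. \<Sum>j\<in>S2. of_bool (i \<in> near S2 S1 j)) = (\<Sum>j\<in>S2. real (card (near S2 S1 j)))"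
    using fin by (subst sum.swap) (simp add: Int_absorb1 Int_commute)
  with \<open>\<And>i. near S1 S2 i \<subseteq> S2\<close> have "real (card S1) * real (card S2)
        - (\<Sum>i\<in>S1. real (card (near S1 S2 i))) - (\<Sum>j\<in>S2. real (card (near S2 S1 j)))
      = (\<Sum>i\<in>S1. \<Sum>j\<in>S2. 1 - bad i j)"
    using fin by (simp add: bad_def sum_subtractf sum.distrib Int_absorb1 Int_commute)
  also have "\<dots> \<le> 10 * rev_split S1 S2"
    unfolding rev_split_def sum_distrib_left using pointwise by (intro sum_mono) auto
  finally show ?thesis .
qed

lemma rev_split_opt_2means_ge:
  fixes S :: "'a::euclidean_space set"
  assumes fin: "finite S" and opt: "opt_2means S S1 S2"
  shows "real (card S1) * real (card S2) / 35 \<le> rev_split S1 S2"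
proof -
  define n1 n2 where "n1 = real (card S1)" and "n2 = real (card S2)"
  have "finite S1" "finite S2"
    using fin opt unfolding opt_2means_def by auto
  have "n1 + n2 > 0"
    using opt \<open>finite S1\<close> unfolding opt_2means_def n1_def n2_def by (auto simp: card_gt_0_iff intro: add_pos_nonneg)
  have near_bound: "81 * (\<Sum>i\<in>S1. real (card (near S1 S2 i))) + 81 * (\<Sum>j\<in>S2. real (card (near S2 S1 j)))
      \<le> 42 * (n1 * n2)"
  proof -
    define w where "w = n1 / (n1 + n2)"
    have w': "n2 / (n2 + n1) = 1 - w"
      using \<open>n1 + n2 > 0\<close> by (simp add: w_def field_simps)
    have "42 * n1 * n2 * w + 42 * n2 * n1 * (n2 / (n2 + n1)) = 42 * (n1 * n2)"
      unfolding w' by (simp add: algebra_simps)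
    then show ?thesis
      using sum_card_near_le[OF fin opt] sum_card_near_le[OF fin opt_2means_sym[OF opt]]
      unfolding w_def n1_def n2_def by linarith
  qed
  have "0 \<le> n1 * n2"
    by (simp add: n1_def n2_def)
  then show ?thesis
    using near_bound rev_split_ge_card_near[OF \<open>finite S1\<close> \<open>finite S2\<close>]
    unfolding n1_def n2_def by linarith
qed

lemma choose_two_add: "(a + b) choose 2 = (a choose 2) + (b choose 2) + a * b"
  by (induction b) (simp_all add: numeral_2_eq_2)

lemma card_lset_Node:
  assumes "distinct (leaves (Node l r))"
  shows "card (lset (Node l r)) = card (lset l) + card (lset r)"
  using assms by (simp add: lset_def card_Un_disjoint)

lemma rev_tree_le_choose:
  "distinct (leaves t) \<Longrightarrow> rev_tree t \<le> real (card (lset t) choose 2)"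
proof (induction t)
  case (Node l r)
  then have "rev_tree (Node l r)
      \<le> real (card (lset l)) * real (card (lset r)) + real (card (lset l) choose 2) + real (card (lset r) choose 2)"
    using rev_split_le[of "lset l" "lset r"] by fastforce
  then show ?case
    using Node.prems by (simp add: card_lset_Node choose_two_add)
qed (simp add: lset_def)

lemma rev_tree_ge_choose:
  "distinct (leaves t) \<Longrightarrow> all_splits_opt t \<Longrightarrow> real (card (lset t) choose 2) / 35 \<le> rev_tree t"
proof (induction t)
  case (Node l r)
  have "finite (lset (Node l r))"
    by (simp add: lset_def)
  then have "real (card (lset l)) * real (card (lset r)) / 35 + real (card (lset l) choose 2) / 35
      + real (card (lset r) choose 2) / 35 \<le> rev_tree (Node l r)"
    using Node rev_split_opt_2means_ge[of "lset (Node l r)" "lset l" "lset r"] by fastforce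
  then show ?case
    using Node.prems by (simp add: card_lset_Node choose_two_add add_divide_distrib)
qed (simp add: lset_def)

theorem mainTheorem1:
  fixes V :: "'a::euclidean_space set" and T :: "'a htree"
  assumes "finite V" and "card V \<ge> 2"
    and "bisecting_kmeans_tree V T"
  shows "\<forall>T'. hc_tree V T' \<longrightarrow> rev_tree T \<ge> (1/35) * rev_tree T'"
proof (intro allI impI)
  fix T' assume "hc_tree V T'"
  then have "rev_tree T' \<le> real (card V choose 2)"
    using rev_tree_le_choose[of T'] by (simp add: hc_tree_def lset_def)
  moreover have "real (card V choose 2) / 35 \<le> rev_tree T"
    using assms(3) rev_tree_ge_choose[of T] by (simp add: bisecting_kmeans_tree_def hc_tree_def lset_def)
  ultimately show "rev_tree T \<ge> (1/35) * rev_tree T'"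
    by simp
qed

end
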